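(* Let $Y$ be a Hilbert space and $r=2$. Let $F$ be Fréchet differentiable and satisfy Assumption (A4) with constants $\rho$ and $K$, and assume $\mathcal M_\rho$ is contained in the interior of $\mathcal D(F)$. Let $y^\delta\in Y$, $\alpha>0$, let $x_\alpha^\delta$ be a minimizer of $\|F(x)-y^\delta\|^2+\alpha\mathcal R(x)$ over $\mathcal D(F)$ and $x_\alpha$ a minimizer of $\|F(x)-y\|^2+\alpha\mathcal R(x)$ over $\mathcal D(F)$, and assume $x^\delta_\alpha,x_\alpha\in\mathcal M_\rho$. Then $\xi_\alpha:=\frac{2}{\alpha}F'(x_\alpha)^*(y-F(x_\alpha))\in\partial\mathcal R(x_\alpha)$ and $$\|F(x^\delta_\alpha)-y^\delta+y-F(x_\alpha)\|^2+2\alpha\Big(1-\frac{4K^2\|F(x_\alpha)-y\|^2}{\alpha}\Big)D_{\xi_\alpha}\mathcal R(x^\delta_\alpha,x_\alpha)\le3\|y^\delta-y\|^2.$$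
   Context: Setting: $X$ is a reflexive Banach space, $Y$ a Hilbert space (identified with its dual, so $F'(x)^*:Y\to X^*$), $F:\mathcal D(F)\subset X\to Y$ weakly closed, $\mathcal R:X\to[0,\infty]$ proper, lower semicontinuous, convex; $F(x)=y$ has a solution in $\mathcal D(\mathcal R)$ and $x^\dagger$ is an $\mathcal R$-minimizing solution (a solution minimizing $\mathcal R$ among all solutions of $F(x)=y$). $\partial\mathcal R$ is the subdifferential and $D_\xi\mathcal R(\bar x,x)=\mathcal R(\bar x)-\mathcal R(x)-\langle\xi,\bar x-x\rangle$ for $\xi\in\partial\mathcal R(x)$. $\mathcal M_\rho:=\{x\in\mathcal D(F):\mathcal R(x)<\rho\}$. Assumption (A4): $F$ is Fréchet differentiable with derivative $F'$, and there exist $\rho>\mathcal R(x^\dagger)$ and $K\ge0$ such that $\|F(\bar x)-F(x)-F'(x)(\bar x-x)\|\le K[D_\xi\mathcal R(\bar x,x)]^{1/2}\|F(\bar x)-F(x)\|$ for all $\bar x,x\in\mathcal M_\rho$ and all $\xi\in\partial\mathcal R(x)$. *)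

theory Defs
  imports "HOL-Analysis.Analysis" "HOL-Library.Extended_Real"
begin

text \<open>Elements of the dual space X* are modelled as bounded linear functionals
  'a \<Rightarrow> real; the dual pairing is function application.\<close>

definition reflexive_space :: "'a::banach itself \<Rightarrow> bool" where
  "reflexive_space _ \<longleftrightarrow>
     (\<forall>\<phi> :: ('a \<Rightarrow>\<^sub>L real) \<Rightarrow>\<^sub>L real. \<exists>x::'a. \<forall>\<xi>. blinfun_apply \<phi> \<xi> = blinfun_apply \<xi> x)"

definition weak_conv_X :: "(nat \<Rightarrow> 'a::real_normed_vector) \<Rightarrow> 'a \<Rightarrow> bool" where
  "weak_conv_X xs x \<longleftrightarrow> (\<forall>\<xi>::'a \<Rightarrow> real. bounded_linear \<xi> \<longrightarrow> (\<lambda>n. \<xi> (xs n)) \<longlonglongrightarrow> \<xi> x)"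

definition weak_conv_Y :: "(nat \<Rightarrow> 'b::real_inner) \<Rightarrow> 'b \<Rightarrow> bool" where
  "weak_conv_Y ys y \<longleftrightarrow> (\<forall>w. (\<lambda>n. inner w (ys n)) \<longlonglongrightarrow> inner w y)"

definition weakly_closed_op :: "('a::real_normed_vector \<Rightarrow> 'b::real_inner) \<Rightarrow> 'a set \<Rightarrow> bool" where
  "weakly_closed_op F D \<longleftrightarrow>
     (\<forall>xs x z. (\<forall>n. xs n \<in> D) \<longrightarrow> weak_conv_X xs x \<longrightarrow> weak_conv_Y (\<lambda>n. F (xs n)) z
        \<longrightarrow> x \<in> D \<and> F x = z)"

definition proper_fun :: "('a \<Rightarrow> ereal) \<Rightarrow> bool" where
  "proper_fun R \<longleftrightarrow> (\<exists>x. R x < \<infinity>) \<and> (\<forall>x. R x > -\<infinity>)"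

definition lsc_fun :: "('a::topological_space \<Rightarrow> ereal) \<Rightarrow> bool" where
  "lsc_fun R \<longleftrightarrow> (\<forall>c. closed {x. R x \<le> c})"

definition convex_fun :: "('a::real_vector \<Rightarrow> ereal) \<Rightarrow> bool" where
  "convex_fun R \<longleftrightarrow> (\<forall>x y t. 0 \<le> t \<and> t \<le> 1 \<longrightarrow>
      R ((1 - t) *\<^sub>R x + t *\<^sub>R y) \<le> ereal (1 - t) * R x + ereal t * R y)"

definition subdiff :: "('a::real_normed_vector \<Rightarrow> ereal) \<Rightarrow> 'a \<Rightarrow> ('a \<Rightarrow> real) set" where
  "subdiff R x = {\<xi>. bounded_linear \<xi> \<and> (\<forall>z. R z \<ge> R x + ereal (\<xi> (z - x)))}"

definition bregman :: "('a::real_vector \<Rightarrow> ereal) \<Rightarrow> ('a \<Rightarrow> real) \<Rightarrow> 'a \<Rightarrow> 'a \<Rightarrow> ereal" where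
  "bregman R \<xi> xb x = R xb - R x - ereal (\<xi> (xb - x))"

definition M_set :: "'a set \<Rightarrow> ('a \<Rightarrow> ereal) \<Rightarrow> real \<Rightarrow> 'a set" where
  "M_set D R \<rho> = {x \<in> D. R x < ereal \<rho>}"

definition R_min_solution :: "('a \<Rightarrow> 'b) \<Rightarrow> 'a set \<Rightarrow> ('a \<Rightarrow> ereal) \<Rightarrow> 'b \<Rightarrow> 'a \<Rightarrow> bool" where
  "R_min_solution F D R y xd \<longleftrightarrow> xd \<in> D \<and> F xd = y \<and> (\<forall>x\<in>D. F x = y \<longrightarrow> R xd \<le> R x)"

definition A4 :: "('a::real_normed_vector \<Rightarrow> 'b::real_normed_vector) \<Rightarrow> ('a \<Rightarrow> 'a \<Rightarrow> 'b) \<Rightarrow> 'a set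
    \<Rightarrow> ('a \<Rightarrow> ereal) \<Rightarrow> 'a \<Rightarrow> real \<Rightarrow> real \<Rightarrow> bool" where
  "A4 F F' D R xd \<rho> K \<longleftrightarrow> ereal \<rho> > R xd \<and> K \<ge> 0 \<and>
     (\<forall>xb\<in>M_set D R \<rho>. \<forall>x\<in>M_set D R \<rho>. \<forall>\<xi>\<in>subdiff R x.
        norm (F xb - F x - F' x (xb - x))
          \<le> K * sqrt (real_of_ereal (bregman R \<xi> xb x)) * norm (F xb - F x))"

definition is_minimizer_on :: "'a set \<Rightarrow> ('a \<Rightarrow> ereal) \<Rightarrow> 'a \<Rightarrow> bool" where
  "is_minimizer_on D J x \<longleftrightarrow> x \<in> D \<and> (\<forall>z\<in>D. J x \<le> J z)"

end

theory Submission imports Defs begin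

text \<open>At a minimizer \<open>x\<^sub>\<alpha>\<close> of the Tikhonov functional, comparing with convex combinations
  \<open>x\<^sub>\<alpha> + t (z - x\<^sub>\<alpha>)\<close> and letting \<open>t \<down> 0\<close> gives the first-order condition
  \<open>\<xi>\<^sub>\<alpha> \<in> \<partial>R(x\<^sub>\<alpha>)\<close>. For the estimate, the minimality of \<open>x\<^sub>\<alpha>\<^sup>\<delta>\<close> against \<open>x\<^sub>\<alpha>\<close>, rewritten
  with \<open>\<xi>\<^sub>\<alpha>\<close>, bounds the Bregman distance by \<open>2\<langle>F(x\<^sub>\<alpha>) - y, F'(x\<^sub>\<alpha>)(x\<^sub>\<alpha>\<^sup>\<delta> - x\<^sub>\<alpha>) - (F(x\<^sub>\<alpha>\<^sup>\<delta>) - F(x\<^sub>\<alpha>))\<rangle>\<close>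
  plus data terms; (A4) and Young's inequality absorb the linearisation error into the left-hand
  side, at the cost of the factor \<open>1 - 4K\<^sup>2\<parallel>F(x\<^sub>\<alpha>) - y\<parallel>\<^sup>2/\<alpha>\<close>.\<close>

lemma has_field_derivative_sq_dist_along_line:
  fixes F :: "'a::real_normed_vector \<Rightarrow> 'b::real_inner"
  assumes "(F has_derivative L) (at x)"
  shows "((\<lambda>t. (norm (F (x + t *\<^sub>R h) - y))\<^sup>2) has_field_derivative 2 * inner (F x - y) (L h)) (at 0)"
proof -
  have lin: "linear L" using assms has_derivative_linear by blast
  have "((\<lambda>t. x + t *\<^sub>R h) has_derivative (\<lambda>t. t *\<^sub>R h)) (at 0)"
    by (auto intro!: derivative_eq_intros)
  from diff_chain_at[OF this] assms
  have "((\<lambda>t. F (x + t *\<^sub>R h)) has_derivative (\<lambda>t. L (t *\<^sub>R h))) (at 0)"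
    by (simp add: o_def)
  then have dF: "((\<lambda>t. F (x + t *\<^sub>R h) - y) has_derivative (\<lambda>t. t *\<^sub>R L h)) (at 0)"
    using has_derivative_diff[OF _ has_derivative_const[of y]] linear_scale[OF lin] by simp
  have "((\<lambda>t. inner (F (x + t *\<^sub>R h) - y) (F (x + t *\<^sub>R h) - y)) has_derivative
      (\<lambda>t. inner (F x - y) (t *\<^sub>R L h) + inner (t *\<^sub>R L h) (F x - y))) (at 0)"
    using has_derivative_inner[OF dF dF] by simp
  then have "((\<lambda>t. (norm (F (x + t *\<^sub>R h) - y))\<^sup>2) has_derivative
      (\<lambda>t. t * (2 * inner (F x - y) (L h)))) (at 0)"
    by (simp add: power2_norm_eq_inner inner_commute algebra_simps)
  then show ?thesis
    unfolding has_field_derivative_def by (rule has_derivative_eq_rhs) (simp add: fun_eq_iff)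
qed

lemma convex_fun_segment_le:
  assumes "convex_fun R" "R x = ereal r" "R z = ereal s" "0 \<le> t" "t \<le> 1"
  shows "R (x + t *\<^sub>R (z - x)) \<le> ereal ((1 - t) * r + t * s)"
proof -
  have "x + t *\<^sub>R (z - x) = (1 - t) *\<^sub>R x + t *\<^sub>R z"
    by (simp add: algebra_simps)
  then show ?thesis
    using assms unfolding convex_fun_def by (metis plus_ereal.simps(1) times_ereal.simps(1))
qed

lemma tikhonov_minimizer_first_order:
  fixes F :: "'a::real_normed_vector \<Rightarrow> 'b::real_inner"
  assumes x_int: "x \<in> interior D"
    and der: "(F has_derivative L) (at x)"
    and convex: "convex_fun R"
    and Rx: "R x = ereal r" and Rz: "R z = ereal s"
    and alpha: "\<alpha> > 0"
    and min: "is_minimizer_on D (\<lambda>x. ereal ((norm (F x - y))\<^sup>2) + ereal \<alpha> * R x) x"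
  shows "\<alpha> * (r - s) \<le> 2 * inner (F x - y) (L (z - x))"
proof -
  define g where "g t = (norm (F (x + t *\<^sub>R (z - x)) - y))\<^sup>2" for t :: real
  have "(g has_field_derivative 2 * inner (F x - y) (L (z - x))) (at 0 within {0<..})"
    unfolding g_def
    by (rule has_field_derivative_at_within[OF has_field_derivative_sq_dist_along_line[OF der]])
  then have lim: "((\<lambda>t. (g t - g 0) / (t - 0)) \<longlongrightarrow> 2 * inner (F x - y) (L (z - x)))
      (at 0 within {0<..})"
    by (simp add: has_field_derivative_iff)
  have "((\<lambda>t. x + t *\<^sub>R (z - x)) \<longlongrightarrow> x + 0 *\<^sub>R (z - x)) (at 0 within {0<..})"
    by (intro tendsto_intros)
  then have near: "\<forall>\<^sub>F t in at 0 within {0<..}. x + t *\<^sub>R (z - x) \<in> interior D"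
    using x_int by (simp add: topological_tendstoD)
  have small: "\<forall>\<^sub>F t in at (0::real) within {0<..}. 0 < t \<and> t < 1"
    by (rule eventually_at_rightI[of 0 1]) auto
  have "\<forall>\<^sub>F t in at 0 within {0<..}. \<alpha> * (r - s) \<le> (g t - g 0) / (t - 0)"
    using near small
  proof eventually_elim
    case (elim t)
    then have t: "0 < t" "t < 1" and xt: "x + t *\<^sub>R (z - x) \<in> D"
      using interior_subset by auto
    have "ereal (g 0) + ereal \<alpha> * ereal r \<le> ereal (g t) + ereal \<alpha> * R (x + t *\<^sub>R (z - x))"
      using min xt Rx unfolding is_minimizer_on_def g_def by auto
    also have "\<dots> \<le> ereal (g t) + ereal \<alpha> * ereal ((1 - t) * r + t * s)"
      using convex_fun_segment_le[OF convex Rx Rz, of t] t alpha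
      by (intro add_left_mono ereal_mult_left_mono) auto
    finally have "t * (\<alpha> * (r - s)) \<le> g t - g 0"
      by (simp add: algebra_simps)
    then show ?case
      using t by (simp add: pos_le_divide_eq mult.commute)
  qed
  then show ?thesis
    by (rule tendsto_lowerbound[OF lim]) simp
qed

lemma tikhonov_minimizer_subgradient:
  fixes F :: "'a::real_normed_vector \<Rightarrow> 'b::real_inner"
  assumes x_int: "x \<in> interior D"
    and der: "(F has_derivative L) (at x)"
    and convex: "convex_fun R"
    and Rx: "R x = ereal r"
    and R_bounded_below: "\<forall>z. R z > -\<infinity>"
    and alpha: "\<alpha> > 0"
    and min: "is_minimizer_on D (\<lambda>x. ereal ((norm (F x - y))\<^sup>2) + ereal \<alpha> * R x) x"
  shows "(\<lambda>h. (2 / \<alpha>) * inner (y - F x) (L h)) \<in> subdiff R x"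
  unfolding subdiff_def mem_Collect_eq
proof (intro conjI allI)
  show "bounded_linear (\<lambda>h. (2 / \<alpha>) * inner (y - F x) (L h))"
    using der by (intro bounded_linear_intros) (rule has_derivative_bounded_linear)
next
  fix z
  show "R x + ereal ((2 / \<alpha>) * inner (y - F x) (L (z - x))) \<le> R z"
  proof (cases "R z")
    case (real s)
    have "\<alpha> * (r - s) \<le> 2 * inner (F x - y) (L (z - x))"
      by (rule tikhonov_minimizer_first_order[OF x_int der convex Rx real alpha min])
    then have "\<alpha> * (r + (2 / \<alpha>) * inner (y - F x) (L (z - x))) \<le> \<alpha> * s"
      using alpha by (simp add: algebra_simps)
    then show ?thesis
      using alpha Rx real by simp
  next
    case MInf
    then show ?thesis using R_bounded_below by auto
  qed (simp add: Rx)
qed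

lemma tikhonov_minimality_bregman:
  fixes F :: "'a::real_vector \<Rightarrow> 'b::real_inner"
  assumes min: "is_minimizer_on D (\<lambda>x. ereal ((norm (F x - y\<delta>))\<^sup>2) + ereal \<alpha> * R x) z"
    and Rz: "R z = ereal s" and "x \<in> D" and Rx: "R x = ereal r" and "\<alpha> \<noteq> 0"
  shows "(norm (F z - F x + (F x - y) + (y - y\<delta>)))\<^sup>2
      + \<alpha> * (s - r - (2 / \<alpha>) * inner (y - F x) (L (z - x)))
    \<le> (norm (F x - y + (y - y\<delta>)))\<^sup>2 + 2 * inner (F x - y) (L (z - x))"
proof -
  have "ereal ((norm (F z - y\<delta>))\<^sup>2) + ereal \<alpha> * R z \<le> ereal ((norm (F x - y\<delta>))\<^sup>2) + ereal \<alpha> * R x"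
    using min \<open>x \<in> D\<close> unfolding is_minimizer_on_def by blast
  then have "(norm (F z - y\<delta>))\<^sup>2 + \<alpha> * s \<le> (norm (F x - y\<delta>))\<^sup>2 + \<alpha> * r"
    using Rx Rz by simp
  then show ?thesis
    using \<open>\<alpha> \<noteq> 0\<close> by (simp add: algebra_simps)
qed

text \<open>Here \<open>u = F(x\<^sub>\<alpha>\<^sup>\<delta>) - F(x\<^sub>\<alpha>)\<close>, \<open>v = F'(x\<^sub>\<alpha>)(x\<^sub>\<alpha>\<^sup>\<delta> - x\<^sub>\<alpha>)\<close>, \<open>w = F(x\<^sub>\<alpha>) - y\<close>, \<open>d = y - y\<^sup>\<delta>\<close>
  and \<open>B\<close> is the Bregman distance; the first hypothesis is the minimality of \<open>x\<^sub>\<alpha>\<^sup>\<delta>\<close>.\<close>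

lemma tikhonov_bregman_estimate:
  fixes u v w d :: "'b::real_inner"
  assumes min: "(norm (u + w + d))\<^sup>2 + \<alpha> * B \<le> (norm (w + d))\<^sup>2 + 2 * inner w v"
    and lin_error: "norm (u - v) \<le> K * sqrt B * norm u"
    and "0 \<le> B" and "\<alpha> \<noteq> 0"
  shows "(norm (u + d))\<^sup>2 + 2 * \<alpha> * (1 - 4 * K\<^sup>2 * (norm w)\<^sup>2 / \<alpha>) * B \<le> 3 * (norm d)\<^sup>2"
proof -
  have expand: "(norm u)\<^sup>2 + 2 * inner u d + \<alpha> * B \<le> 2 * inner w (v - u)"
    using min by (simp add: power2_norm_eq_inner algebra_simps inner_commute)
  have young: "2 * (norm w * (K * S * norm u)) \<le> (norm u)\<^sup>2 / 4 + 4 * K\<^sup>2 * (norm w)\<^sup>2 * S\<^sup>2"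
    for S
    using zero_le_power2[of "norm u / 2 - 2 * K * norm w * S"]
    by (simp add: power2_eq_square algebra_simps)
  have "inner w (v - u) \<le> norm w * (K * sqrt B * norm u)"
    using norm_cauchy_schwarz[of w "v - u"] lin_error
    by (metis mult_left_mono norm_ge_zero norm_minus_commute order_trans)
  moreover note young[of "sqrt B", unfolded real_sqrt_pow2[OF \<open>0 \<le> B\<close>]]
  moreover have "(norm u)\<^sup>2 \<le> 2 * (norm (u + d))\<^sup>2 + 2 * (norm d)\<^sup>2"
    using zero_le_power2[of "norm (u + 2 *\<^sub>R d)"]
    by (simp add: power2_norm_eq_inner algebra_simps inner_commute)
  moreover have "(norm (u + d))\<^sup>2 = (norm u)\<^sup>2 + (norm d)\<^sup>2 + 2 * inner u d"
    by (simp add: power2_norm_eq_inner algebra_simps inner_commute)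
  moreover have "2 * \<alpha> * (1 - 4 * K\<^sup>2 * (norm w)\<^sup>2 / \<alpha>) * B = 2 * \<alpha> * B - 8 * K\<^sup>2 * (norm w)\<^sup>2 * B"
    using \<open>\<alpha> \<noteq> 0\<close> by (simp add: field_simps)
  ultimately show ?thesis
    using expand by linarith
qed

theorem lemma3p5:
  fixes F :: "'a::banach \<Rightarrow> 'b::{real_inner, banach}"
    and F' :: "'a \<Rightarrow> 'a \<Rightarrow> 'b"
    and D :: "'a set" and R :: "'a \<Rightarrow> ereal"
    and y y\<delta> :: 'b and xdag x\<alpha>\<delta> x\<alpha> :: 'a and \<rho> K \<alpha> :: real
  assumes refl: "reflexive_space TYPE('a)"
    and wclosed: "weakly_closed_op F D"
    and R_nonneg: "\<forall>x. R x \<ge> 0"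
    and R_proper: "proper_fun R" and R_lsc: "lsc_fun R" and R_convex: "convex_fun R"
    and sol_exists: "\<exists>x\<in>D. F x = y \<and> R x < \<infinity>"
    and xdag: "R_min_solution F D R y xdag"
    and deriv: "\<forall>x\<in>interior D. (F has_derivative F' x) (at x)"
    and A4: "A4 F F' D R xdag \<rho> K"
    and M_int: "M_set D R \<rho> \<subseteq> interior D"
    and alpha: "\<alpha> > 0"
    and min_delta: "is_minimizer_on D (\<lambda>x. ereal ((norm (F x - y\<delta>))\<^sup>2) + ereal \<alpha> * R x) x\<alpha>\<delta>"
    and min_exact: "is_minimizer_on D (\<lambda>x. ereal ((norm (F x - y))\<^sup>2) + ereal \<alpha> * R x) x\<alpha>"
    and in_M: "x\<alpha>\<delta> \<in> M_set D R \<rho>" "x\<alpha> \<in> M_set D R \<rho>"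
  shows "(\<lambda>h. (2 / \<alpha>) * inner (y - F x\<alpha>) (F' x\<alpha> h)) \<in> subdiff R x\<alpha> \<and>
    ereal ((norm (F x\<alpha>\<delta> - y\<delta> + y - F x\<alpha>))\<^sup>2)
      + ereal (2 * \<alpha> * (1 - 4 * K\<^sup>2 * (norm (F x\<alpha> - y))\<^sup>2 / \<alpha>))
        * bregman R (\<lambda>h. (2 / \<alpha>) * inner (y - F x\<alpha>) (F' x\<alpha> h)) x\<alpha>\<delta> x\<alpha>
    \<le> ereal (3 * (norm (y\<delta> - y))\<^sup>2)"
proof -
  define \<xi> where "\<xi> h = (2 / \<alpha>) * inner (y - F x\<alpha>) (F' x\<alpha> h)" for h
  obtain r where r: "R x\<alpha> = ereal r"
    using in_M(2) R_nonneg unfolding M_set_def by (cases "R x\<alpha>") auto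
  obtain r\<delta> where r\<delta>: "R x\<alpha>\<delta> = ereal r\<delta>"
    using in_M(1) R_nonneg unfolding M_set_def by (cases "R x\<alpha>\<delta>") auto
  have R_bounded_below: "\<forall>z. R z > -\<infinity>"
    using R_nonneg by (auto intro: less_le_trans[of _ 0])
  have x_int: "x\<alpha> \<in> interior D" using in_M(2) M_int by auto
  then have der: "(F has_derivative F' x\<alpha>) (at x\<alpha>)" using deriv by auto
  have sub: "\<xi> \<in> subdiff R x\<alpha>"
    unfolding \<xi>_def
    by (rule tikhonov_minimizer_subgradient[OF x_int der R_convex r R_bounded_below alpha min_exact])
  define B where "B = r\<delta> - r - \<xi> (x\<alpha>\<delta> - x\<alpha>)"
  have breg: "bregman R \<xi> x\<alpha>\<delta> x\<alpha> = ereal B"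
    unfolding bregman_def B_def using r r\<delta> by simp
  have "R x\<alpha> + ereal (\<xi> (x\<alpha>\<delta> - x\<alpha>)) \<le> R x\<alpha>\<delta>"
    using sub unfolding subdiff_def by blast
  then have "0 \<le> B"
    using r r\<delta> unfolding B_def by simp
  have "norm (F x\<alpha>\<delta> - F x\<alpha> - F' x\<alpha> (x\<alpha>\<delta> - x\<alpha>))
      \<le> K * sqrt (real_of_ereal (bregman R \<xi> x\<alpha>\<delta> x\<alpha>)) * norm (F x\<alpha>\<delta> - F x\<alpha>)"
    using A4 in_M sub unfolding A4_def by blast
  then have lin_error: "norm (F x\<alpha>\<delta> - F x\<alpha> - F' x\<alpha> (x\<alpha>\<delta> - x\<alpha>)) \<le> K * sqrt B * norm (F x\<alpha>\<delta> - F x\<alpha>)"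
    unfolding breg by simp
  have min: "(norm (F x\<alpha>\<delta> - F x\<alpha> + (F x\<alpha> - y) + (y - y\<delta>)))\<^sup>2 + \<alpha> * B
      \<le> (norm (F x\<alpha> - y + (y - y\<delta>)))\<^sup>2 + 2 * inner (F x\<alpha> - y) (F' x\<alpha> (x\<alpha>\<delta> - x\<alpha>))"
    unfolding B_def \<xi>_def
    using alpha interior_subset x_int by (intro tikhonov_minimality_bregman[OF min_delta r\<delta> _ r]) auto
  have "(norm (F x\<alpha>\<delta> - F x\<alpha> + (y - y\<delta>)))\<^sup>2
      + 2 * \<alpha> * (1 - 4 * K\<^sup>2 * (norm (F x\<alpha> - y))\<^sup>2 / \<alpha>) * B \<le> 3 * (norm (y - y\<delta>))\<^sup>2"
    using alpha by (intro tikhonov_bregman_estimate[OF min lin_error \<open>0 \<le> B\<close>]) simp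
  moreover have "F x\<alpha>\<delta> - F x\<alpha> + (y - y\<delta>) = F x\<alpha>\<delta> - y\<delta> + y - F x\<alpha>"
    by (simp add: algebra_simps)
  ultimately show ?thesis
    using sub breg unfolding \<xi>_def[abs_def] by (simp add: norm_minus_commute[of y\<delta> y])
qed

end
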